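(* For the influence maximization problem in the independent cascade model with full-adoption feedback, the adaptivity gap is at least $\frac{e}{e-1}$, even when the influence graph is a directed line; that is, $$\sup_{G\text{ a directed line},\,k\ge 1}\frac{\mathrm{OPT}_A(G,k)}{\mathrm{OPT}_N(G,k)}\ge \frac{e}{e-1}.$$
   Context: Independent cascade (IC) model: an influence graph is a directed graph $G=(V,E,p)$ with a probability $p_{uv}\in[0,1]$ on each edge $(u,v)\in E$. A directed line is an influence graph whose underlying graph is a directed path $v_1\to v_2\to\cdots\to v_m$. A live-edge graph (realization) $\phi$ is a random subgraph in which each edge $(u,v)$ is present ("live") independently with probability $p_{uv}$; $\mathcal{P}$ denotes this distribution. For $S\subseteq V$, $\Gamma(S,\phi)$ is the set of nodes reachable from $S$ in $\phi$, and $\sigma(S)=\mathbb{E}_{\Phi\sim\mathcal{P}}[|\Gamma(S,\Phi)|]$. Full-adoption feedback: when a node $u$ is selected as a seed, one observes the live/blocked status of all out-going edges of every node reachable from $u$ in the realization. An adaptive policy $\pi$ maps the observations so far (seeds selected and their feedback) to the next node to select; $V(\pi,\phi)$ is the seed set it selects under realization $\phi$, and $\sigma(\pi)=\mathbb{E}_{\Phi\sim\mathcal{P}}[|\Gamma(V(\pi,\Phi),\Phi)|]$. $\Pi(k)$ is the set of policies with $|V(\pi,\phi)|\le k$ for every realization $\phi$. $\mathrm{OPT}_N(G,k)=\max_{|S|\le k}\sigma(S)$ and $\mathrm{OPT}_A(G,k)=\sup_{\pi\in\Pi(k)}\sigma(\pi)$. *)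

theory Defs
  imports Complex_Main
begin

text \<open>A directed line with m nodes 0,...,m-1 and edges e -> e+1 for e < m-1.
  Edge e carries probability p e.  A realization (live-edge graph) is the set of
  live edges, a subset of {..<m-1}.\<close>

definition line_probs :: "nat \<Rightarrow> (nat \<Rightarrow> real) \<Rightarrow> bool" where
  "line_probs m p \<longleftrightarrow> (\<forall>e<m-1. 0 \<le> p e \<and> p e \<le> 1)"

definition realizations :: "nat \<Rightarrow> nat set set" where
  "realizations m = Pow {..<m-1}"

definition rprob :: "nat \<Rightarrow> (nat \<Rightarrow> real) \<Rightarrow> nat set \<Rightarrow> real" where
  "rprob m p \<phi> = (\<Prod>e\<in>{..<m-1}. if e \<in> \<phi> then p e else 1 - p e)"

definition reach :: "nat \<Rightarrow> nat set \<Rightarrow> nat set \<Rightarrow> nat set" where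
  "reach m \<phi> S = {j. j < m \<and> (\<exists>i\<in>S. i \<le> j \<and> (\<forall>e. i \<le> e \<and> e < j \<longrightarrow> e \<in> \<phi>))}"

definition spread :: "nat \<Rightarrow> (nat \<Rightarrow> real) \<Rightarrow> nat set \<Rightarrow> real" where
  "spread m p S = (\<Sum>\<phi>\<in>realizations m. rprob m p \<phi> * real (card (reach m \<phi> S)))"

definition OPT_N :: "nat \<Rightarrow> (nat \<Rightarrow> real) \<Rightarrow> nat \<Rightarrow> real" where
  "OPT_N m p k = Max (spread m p ` {S. S \<subseteq> {..<m} \<and> card S \<le> k})"

definition feedback :: "nat \<Rightarrow> nat set \<Rightarrow> nat \<Rightarrow> (nat \<times> bool) set" where
  "feedback m \<phi> u = {(e, e \<in> \<phi>) | e. e \<in> reach m \<phi> {u} \<and> e < m - 1}"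

type_synonym history = "(nat \<times> (nat \<times> bool) set) list"

text \<open>An adaptive policy maps the observations so far (seeds selected, in order,
  together with their feedback) to the next seed, or None to stop.\<close>
type_synonym policy = "history \<Rightarrow> nat option"

fun run :: "nat \<Rightarrow> policy \<Rightarrow> nat set \<Rightarrow> nat \<Rightarrow> history" where
  "run m \<pi> \<phi> 0 = []"
| "run m \<pi> \<phi> (Suc n) =
     (let h = run m \<pi> \<phi> n in
      case \<pi> h of None \<Rightarrow> h | Some u \<Rightarrow> h @ [(u, feedback m \<phi> u)])"

definition seeds :: "nat \<Rightarrow> policy \<Rightarrow> nat set \<Rightarrow> nat \<Rightarrow> nat set" where
  "seeds m \<pi> \<phi> k = fst ` set (run m \<pi> \<phi> k)"

definition adaptive_spread :: "nat \<Rightarrow> (nat \<Rightarrow> real) \<Rightarrow> policy \<Rightarrow> nat \<Rightarrow> real" where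
  "adaptive_spread m p \<pi> k =
     (\<Sum>\<phi>\<in>realizations m. rprob m p \<phi> * real (card (reach m \<phi> (seeds m \<pi> \<phi> k))))"

definition OPT_A :: "nat \<Rightarrow> (nat \<Rightarrow> real) \<Rightarrow> nat \<Rightarrow> real" where
  "OPT_A m p k = (SUP \<pi>. adaptive_spread m p \<pi> k)"

end

theory Submission
  imports Defs
begin

text \<open>Take the line on n^2 nodes with edge probability q = 1 - a/n (0 < a < 1) and budget n.
  A non-adaptive seed set cuts the line into segments, and the expected number of nodes a seed
  activates in its segment is a geometric sum, concave in the segment length; so n equal
  segments are best and OPT_N <= n^2 (1 - q^n) / a.
  The adaptive policy that always seeds the first node not yet known to be active spends a
  seed only where a blocked edge stopped the previous cascade, so it activates every node
  preceded by fewer than n blocked edges. A Chernoff bound with parameter 1/a shows that the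
  expected number of the remaining nodes is at most n^2 (a e^(1-a))^n.
  The ratio is thus at least a (1 - (a e^(1-a))^n) / (1 - q^n), which tends to
  a / (1 - e^(-a)) as n grows, and this tends to e / (e - 1) as a tends to 1.\<close>

section \<open>Expectations over live-edge graphs\<close>

definition line_expectation :: "nat \<Rightarrow> (nat \<Rightarrow> real) \<Rightarrow> (nat set \<Rightarrow> real) \<Rightarrow> real" where
  "line_expectation m p X = (\<Sum>\<phi>\<in>realizations m. rprob m p \<phi> * X \<phi>)"

lemma spread_eq_line_expectation:
  "spread m p S = line_expectation m p (\<lambda>\<phi>. real (card (reach m \<phi> S)))"
  unfolding spread_def line_expectation_def ..

lemma adaptive_spread_eq_line_expectation:
  "adaptive_spread m p \<pi> k = line_expectation m p (\<lambda>\<phi>. real (card (reach m \<phi> (seeds m \<pi> \<phi> k))))"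
  unfolding adaptive_spread_def line_expectation_def ..

lemma line_expectation_sum:
  "line_expectation m p (\<lambda>\<phi>. \<Sum>j\<in>J. X j \<phi>) = (\<Sum>j\<in>J. line_expectation m p (X j))"
  unfolding line_expectation_def by (simp add: sum_distrib_left sum.swap[of _ J])

lemma line_expectation_diff:
  "line_expectation m p (\<lambda>\<phi>. X \<phi> - Y \<phi>) = line_expectation m p X - line_expectation m p Y"
  unfolding line_expectation_def by (simp add: right_diff_distrib sum_subtractf)

lemma line_expectation_divide:
  "line_expectation m p (\<lambda>\<phi>. X \<phi> / c) = line_expectation m p X / c"
  unfolding line_expectation_def by (simp add: sum_divide_distrib)

lemma rprob_nonneg: "line_probs m p \<Longrightarrow> 0 \<le> rprob m p \<phi>"
  unfolding line_probs_def rprob_def by (intro prod_nonneg) auto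

lemma line_expectation_mono:
  assumes "line_probs m p" and "\<And>\<phi>. \<phi> \<in> realizations m \<Longrightarrow> X \<phi> \<le> Y \<phi>"
  shows "line_expectation m p X \<le> line_expectation m p Y"
  unfolding line_expectation_def using assms by (intro sum_mono mult_left_mono rprob_nonneg)

lemma sum_Pow_prod:
  fixes w :: "'a \<Rightarrow> bool \<Rightarrow> 'b::comm_semiring_1"
  assumes "finite E"
  shows "(\<Sum>\<phi>\<in>Pow E. \<Prod>e\<in>E. w e (e \<in> \<phi>)) = (\<Prod>e\<in>E. w e True + w e False)"
proof -
  have "(\<Prod>e\<in>E. w e (e \<in> X)) = (\<Prod>e\<in>X. w e True) * (\<Prod>e\<in>E - X. w e False)" if "X \<subseteq> E" for X
  proof -
    have "(\<Prod>e\<in>E. w e (e \<in> X)) = (\<Prod>e\<in>E \<inter> X. w e (e \<in> X)) * (\<Prod>e\<in>E - X. w e (e \<in> X))"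
      using assms by (rule prod.Int_Diff)
    also have "\<dots> = (\<Prod>e\<in>X. w e True) * (\<Prod>e\<in>E - X. w e False)"
      using that by (auto intro!: arg_cong2[where f = "(*)"] prod.cong simp: Int_absorb1)
    finally show ?thesis .
  qed
  then show ?thesis
    using prod_add[OF assms, of "\<lambda>e. w e True" "\<lambda>e. w e False"] by (auto intro: sum.cong)
qed

lemma line_expectation_prod_edges:
  fixes f :: "nat \<Rightarrow> bool \<Rightarrow> real"
  assumes "A \<subseteq> {..<m-1}"
  shows "line_expectation m p (\<lambda>\<phi>. \<Prod>e\<in>A. f e (e \<in> \<phi>))
           = (\<Prod>e\<in>A. p e * f e True + (1 - p e) * f e False)"
proof -
  let ?E = "{..<m-1}"
  define w where "w e b = (if b then p e else 1 - p e) * (if e \<in> A then f e b else 1)" for e b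
  have restrict: "(\<Prod>e\<in>?E. if e \<in> A then g e else 1) = (\<Prod>e\<in>A. g e)" for g :: "nat \<Rightarrow> real"
    using prod.inter_restrict[of ?E g A] assms by (simp add: Int_absorb1)
  have "rprob m p \<phi> * (\<Prod>e\<in>A. f e (e \<in> \<phi>)) = (\<Prod>e\<in>?E. w e (e \<in> \<phi>))" for \<phi>
    unfolding w_def rprob_def prod.distrib restrict[symmetric]
    by (intro arg_cong2[where f = "(*)"] prod.cong) auto
  then have "line_expectation m p (\<lambda>\<phi>. \<Prod>e\<in>A. f e (e \<in> \<phi>)) = (\<Sum>\<phi>\<in>Pow ?E. \<Prod>e\<in>?E. w e (e \<in> \<phi>))"
    unfolding line_expectation_def realizations_def by simp
  also have "\<dots> = (\<Prod>e\<in>?E. w e True + w e False)"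
    by (rule sum_Pow_prod) simp
  also have "\<dots> = (\<Prod>e\<in>A. p e * f e True + (1 - p e) * f e False)"
    unfolding restrict[symmetric] by (rule prod.cong) (auto simp: w_def)
  finally show ?thesis .
qed

lemma sum_rprob: "(\<Sum>\<phi>\<in>realizations m. rprob m p \<phi>) = 1"
  using line_expectation_prod_edges[of "{}" m p "\<lambda>_ _. 1"] by (simp add: line_expectation_def)

lemma line_expectation_const: "line_expectation m p (\<lambda>_. c) = c"
  unfolding line_expectation_def by (simp add: sum_distrib_right[symmetric] sum_rprob)

lemma line_expectation_all_live:
  assumes "A \<subseteq> {..<m-1}"
  shows "line_expectation m p (\<lambda>\<phi>. if A \<subseteq> \<phi> then 1 else 0) = (\<Prod>e\<in>A. p e)"
proof -
  have "finite A" using assms finite_subset by blast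
  then have "(\<Prod>e\<in>A. if e \<in> \<phi> then 1 else 0) = (if A \<subseteq> \<phi> then 1 else (0::real))" for \<phi>
    by (auto simp: subset_iff)
  then show ?thesis
    using line_expectation_prod_edges[OF assms, of p "\<lambda>_ b. if b then 1 else 0"] by simp
qed

lemma line_expectation_power_blocked:
  assumes "A \<subseteq> {..<m-1}"
  shows "line_expectation m (\<lambda>_. q) (\<lambda>\<phi>. x ^ card (A - \<phi>)) = (q + (1 - q) * x) ^ card A"
proof -
  have "finite A" using assms finite_subset by blast
  then have "(\<Prod>e\<in>A. if e \<in> \<phi> then 1 else x) = x ^ card (A - \<phi>)" for \<phi>
    by (simp add: prod.If_cases Diff_eq)
  then show ?thesis
    using line_expectation_prod_edges[OF assms, of "\<lambda>_. q" "\<lambda>_ b. if b then 1 else x"] by simp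
qed

section \<open>The non-adaptive optimum\<close>

definition reach_bound :: "real \<Rightarrow> nat set \<Rightarrow> nat \<Rightarrow> real" where
  "reach_bound q S j = (if \<exists>i\<in>S. i \<le> j then q ^ (j - Max {i\<in>S. i \<le> j}) else 0)"

lemma prob_reach_le_reach_bound:
  assumes q: "0 \<le> q" "q \<le> 1" and j: "j < m"
  shows "line_expectation m (\<lambda>_. q) (\<lambda>\<phi>. if j \<in> reach m \<phi> S then 1 else 0) \<le> reach_bound q S j"
proof (cases "\<exists>i\<in>S. i \<le> j")
  case False
  then have "j \<notin> reach m \<phi> S" for \<phi> unfolding reach_def by auto
  then show ?thesis using False by (simp add: reach_bound_def line_expectation_const)
next
  case True
  define s where "s = Max {i\<in>S. i \<le> j}"
  have fin: "finite {i\<in>S. i \<le> j}" by (rule finite_subset[of _ "{..j}"]) auto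
  moreover have "{i\<in>S. i \<le> j} \<noteq> {}" using True by auto
  ultimately have "s \<in> S" "s \<le> j" using Max_in unfolding s_def by blast+
  have live: "{s..<j} \<subseteq> \<phi>" if "j \<in> reach m \<phi> S" for \<phi>
  proof -
    from that obtain i where "i \<in> S" "i \<le> j" "\<forall>e. i \<le> e \<and> e < j \<longrightarrow> e \<in> \<phi>"
      unfolding reach_def by blast
    moreover from \<open>i \<in> S\<close> \<open>i \<le> j\<close> have "i \<le> s" using fin s_def by simp
    ultimately show ?thesis by auto
  qed
  have "line_expectation m (\<lambda>_. q) (\<lambda>\<phi>. if j \<in> reach m \<phi> S then 1 else 0)
      \<le> line_expectation m (\<lambda>_. q) (\<lambda>\<phi>. if {s..<j} \<subseteq> \<phi> then 1 else 0)"
    using q live by (intro line_expectation_mono) (auto simp: line_probs_def)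
  also have "\<dots> = q ^ (j - s)"
    using line_expectation_all_live[of "{s..<j}" m "\<lambda>_. q"] j by fastforce
  finally show ?thesis using True s_def by (simp add: reach_bound_def)
qed

lemma card_reach_eq_sum:
  "real (card (reach m \<phi> S)) = (\<Sum>j<m. if j \<in> reach m \<phi> S then 1 else 0)"
proof -
  have "reach m \<phi> S = {..<m} \<inter> reach m \<phi> S" unfolding reach_def by auto
  then have "real (card (reach m \<phi> S)) = (\<Sum>j\<in>{..<m} \<inter> reach m \<phi> S. 1)" by simp
  also have "\<dots> = (\<Sum>j<m. if j \<in> reach m \<phi> S then 1 else 0)"
    by (rule sum.inter_restrict) simp
  finally show ?thesis .
qed

lemma spread_le_sum_reach_bound:
  assumes "0 \<le> q" "q \<le> 1"
  shows "spread m (\<lambda>_. q) S \<le> (\<Sum>j<m. reach_bound q S j)"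
  unfolding spread_eq_line_expectation card_reach_eq_sum line_expectation_sum
  using assms by (intro sum_mono prob_reach_le_reach_bound) auto

lemma reach_bound_insert_max:
  assumes "\<forall>a\<in>S. a < b"
  shows "reach_bound q (insert b S) j = (if j < b then reach_bound q S j else q ^ (j - b))"
proof (cases "j < b")
  case True
  then have "{i\<in>insert b S. i \<le> j} = {i\<in>S. i \<le> j}" by auto
  then show ?thesis using True by (simp add: reach_bound_def)
next
  case False
  then have "Max {i\<in>insert b S. i \<le> j} = b" using assms by (intro Max_eqI) auto
  then show ?thesis using False by (auto simp: reach_bound_def)
qed

text \<open>The seeds cut the line into segments, each contributing a geometric sum in its length.\<close>

lemma sum_reach_bound_le:
  assumes G: "\<And>g. (\<Sum>d<g. q ^ d) \<le> A + B * real g" and "0 \<le> B"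
    and "finite S" "S \<subseteq> {..<m}"
  shows "(\<Sum>j<m. reach_bound q S j) \<le> real (card S) * A + B * real m"
  using \<open>finite S\<close> \<open>S \<subseteq> {..<m}\<close>
proof (induction S arbitrary: m rule: finite_linorder_max_induct)
  case empty
  then show ?case using \<open>0 \<le> B\<close> by (simp add: reach_bound_def)
next
  case (insert b S)
  have "b < m" "S \<subseteq> {..<b}" "b \<notin> S" using insert by auto
  have split: "{..<m} = {..<b} \<union> {b..<m}" using \<open>b < m\<close> by auto
  have "(\<Sum>j\<in>{b..<m}. q ^ (j - b)) = (\<Sum>d<m - b. q ^ d)"
    using \<open>b < m\<close> by (intro sum.reindex_bij_witness[of _ "\<lambda>d. d + b" "\<lambda>j. j - b"]) auto
  moreover have "(\<Sum>j<b. reach_bound q (insert b S) j) = (\<Sum>j<b. reach_bound q S j)"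
    by (intro sum.cong) (auto simp: reach_bound_insert_max[OF insert.hyps(2)])
  moreover have "(\<Sum>j\<in>{b..<m}. reach_bound q (insert b S) j) = (\<Sum>j\<in>{b..<m}. q ^ (j - b))"
    by (intro sum.cong) (auto simp: reach_bound_insert_max[OF insert.hyps(2)])
  ultimately have "(\<Sum>j<m. reach_bound q (insert b S) j)
      = (\<Sum>j<b. reach_bound q S j) + (\<Sum>d<m - b. q ^ d)"
    unfolding split by (subst sum.union_disjoint) auto
  also have "\<dots> \<le> (real (card S) * A + B * real b) + (A + B * real (m - b))"
    using insert.IH[OF \<open>S \<subseteq> {..<b}\<close>] G by (rule add_mono)
  also have "\<dots> = real (card (insert b S)) * A + B * real m"
    using insert.hyps(1) \<open>b < m\<close> \<open>b \<notin> S\<close> by (simp add: algebra_simps)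
  finally show ?case .
qed

lemma geometric_sum_le_tangent:
  fixes q :: real
  assumes "0 < q" "q < 1"
  shows "(\<Sum>d<g. q ^ d) \<le> (1 - q ^ t) / (1 - q) + - ln q * q ^ t / (1 - q) * (real g - real t)"
proof -
  have exp_form: "q ^ n = exp (ln q * real n)" for n
    using assms by (simp add: exp_of_nat_mult mult.commute[of "ln q"])
  have "q ^ t * (1 + ln q * (real g - real t)) \<le> q ^ t * exp (ln q * (real g - real t))"
    using assms by (intro mult_left_mono exp_ge_add_one_self) auto
  also have "\<dots> = q ^ g"
    unfolding exp_form by (simp add: exp_add[symmetric] algebra_simps)
  finally have "1 - q ^ g \<le> (1 - q ^ t) + - ln q * q ^ t * (real g - real t)"
    by (simp add: algebra_simps)
  then have "(1 - q ^ g) / (1 - q) \<le> ((1 - q ^ t) + - ln q * q ^ t * (real g - real t)) / (1 - q)"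
    using assms by (intro divide_right_mono) auto
  moreover have "(\<Sum>d<g. q ^ d) = (1 - q ^ g) / (1 - q)"
    using assms by (simp add: geometric_sum field_simps)
  ultimately show ?thesis by (simp add: diff_divide_distrib)
qed

text \<open>Concavity of the geometric sum in the segment length, used through its tangent at t,
  makes segments of equal length t optimal.\<close>

lemma OPT_N_le:
  fixes q :: real
  assumes q: "0 < q" "q < 1"
  shows "OPT_N (k * t) (\<lambda>_. q) k \<le> real k * (1 - q ^ t) / (1 - q)"
proof -
  define B where "B = - ln q * q ^ t / (1 - q)"
  define A where "A = (1 - q ^ t) / (1 - q) - B * real t"
  have G: "(\<Sum>d<g. q ^ d) \<le> A + B * real g" for g
  proof -
    have "A + B * real g = (1 - q ^ t) / (1 - q) + B * (real g - real t)"
      unfolding A_def by (simp add: algebra_simps)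
    then show ?thesis using geometric_sum_le_tangent[OF q, of g t] unfolding B_def by simp
  qed
  have "0 \<le> A" using G[of 0] by simp
  have "0 \<le> B" using q unfolding B_def by (intro divide_nonneg_pos mult_nonneg_nonneg) auto
  have "spread (k * t) (\<lambda>_. q) S \<le> real k * (1 - q ^ t) / (1 - q)"
    if "S \<subseteq> {..<k * t}" "card S \<le> k" for S
  proof -
    have "finite S" using that finite_subset by blast
    have "spread (k * t) (\<lambda>_. q) S \<le> real (card S) * A + B * real (k * t)"
      using spread_le_sum_reach_bound[of q "k * t" S] q
        sum_reach_bound_le[OF G \<open>0 \<le> B\<close> \<open>finite S\<close> that(1)]
      by simp
    also have "\<dots> \<le> real k * (A + B * real t)"
      using mult_right_mono[of "real (card S)" "real k" A] that \<open>0 \<le> A\<close> by (simp add: algebra_simps)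
    also have "\<dots> = real k * (1 - q ^ t) / (1 - q)" unfolding A_def by simp
    finally show ?thesis .
  qed
  moreover have "finite {S. S \<subseteq> {..<k * t} \<and> card S \<le> k}"
    by (rule finite_subset[of _ "Pow {..<k * t}"]) auto
  ultimately show ?thesis unfolding OPT_N_def by (intro Max.boundedI) auto
qed

lemma OPT_N_ge_1:
  assumes "line_probs m p" "1 \<le> m" "1 \<le> k"
  shows "1 \<le> OPT_N m p k"
proof -
  have "0 \<in> reach m \<phi> {0}" for \<phi> using assms unfolding reach_def by auto
  then have "1 \<le> real (card (reach m \<phi> {0}))" for \<phi>
    using card_0_eq[of "reach m \<phi> {0}"] finite_subset[of "reach m \<phi> {0}" "{..<m}"]
    unfolding reach_def by fastforce
  then have "1 \<le> spread m p {0}"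
    unfolding spread_eq_line_expectation
    using line_expectation_mono[OF assms(1), of "\<lambda>_. 1"] line_expectation_const by metis
  also have "\<dots> \<le> OPT_N m p k" unfolding OPT_N_def
    using assms by (intro Max_ge finite_subset[of _ "Pow {..<m}"] imageI) auto
  finally show ?thesis .
qed

section \<open>The greedy adaptive policy\<close>

definition observed_active :: "history \<Rightarrow> nat set" where
  "observed_active h = fst ` set h \<union> {Suc e | e. \<exists>u fb. (u, fb) \<in> set h \<and> (e, True) \<in> fb}"

definition greedy_policy :: "nat \<Rightarrow> policy" where
  "greedy_policy m h = (let x = LEAST j. j \<notin> observed_active h in if x < m then Some x else None)"

definition blocked_before :: "nat set \<Rightarrow> nat \<Rightarrow> nat" where
  "blocked_before \<phi> j = card ({..<j} - \<phi>)"

lemma reach_mono: "S \<subseteq> S' \<Longrightarrow> reach m \<phi> S \<subseteq> reach m \<phi> S'"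
  unfolding reach_def by blast

lemma observed_active_snoc_feedback:
  "observed_active (h @ [(u, feedback m \<phi> u)]) = observed_active h \<union> insert u (reach m \<phi> {u})"
proof -
  have live: "(e, True) \<in> feedback m \<phi> u \<longleftrightarrow> e \<in> reach m \<phi> {u} \<and> e < m - 1 \<and> e \<in> \<phi>" for e
    unfolding feedback_def by auto
  have "{Suc e | e. (e, True) \<in> feedback m \<phi> u} \<subseteq> reach m \<phi> {u}"
    unfolding live by (auto simp: reach_def less_Suc_eq)
  moreover have "reach m \<phi> {u} \<subseteq> insert u {Suc e | e. (e, True) \<in> feedback m \<phi> u}"
  proof
    fix j assume j: "j \<in> reach m \<phi> {u}"
    show "j \<in> insert u {Suc e | e. (e, True) \<in> feedback m \<phi> u}"
    proof (cases j)
      case (Suc e)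
      with j have "j = u \<or> (e, True) \<in> feedback m \<phi> u"
        unfolding live by (auto simp: reach_def le_Suc_eq)
      then show ?thesis using Suc by blast
    qed (use j in \<open>auto simp: reach_def\<close>)
  qed
  moreover have "observed_active (h @ [(u, fb)])
      = observed_active h \<union> insert u {Suc e | e. (e, True) \<in> fb}" for fb
    unfolding observed_active_def by auto
  ultimately show ?thesis by blast
qed

lemma reach_singleton_interval:
  assumes "x < m"
  obtains y where "x \<le> y" "reach m \<phi> {x} = {x..y}" "Suc y = m \<or> y \<notin> \<phi>"
proof -
  let ?R = "reach m \<phi> {x}"
  define y where "y = Max ?R"
  have "finite ?R" by (rule finite_subset[of _ "{..<m}"]) (auto simp: reach_def)
  moreover have "x \<in> ?R" using assms by (auto simp: reach_def)
  ultimately have "y \<in> ?R" and y_max: "\<And>j. j \<in> ?R \<Longrightarrow> j \<le> y"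
    unfolding y_def using Max_in Max_ge by blast+
  then have y: "x \<le> y" "y < m" "\<forall>e. x \<le> e \<and> e < y \<longrightarrow> e \<in> \<phi>"
    unfolding reach_def by auto
  have "?R = {x..y}"
  proof
    show "?R \<subseteq> {x..y}" using y_max by (auto simp: reach_def)
    show "{x..y} \<subseteq> ?R" using y by (auto simp: reach_def)
  qed
  moreover have "Suc y = m \<or> y \<notin> \<phi>"
  proof (rule ccontr)
    assume "\<not> ?thesis"
    then have "Suc y \<in> ?R" using y by (auto simp: reach_def less_Suc_eq)
    then show False using y_max by fastforce
  qed
  ultimately show ?thesis using y(1) that by blast
qed

lemma run_Suc_None: "\<pi> (run m \<pi> \<phi> n) = None \<Longrightarrow> run m \<pi> \<phi> (Suc n) = run m \<pi> \<phi> n"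
  by (simp add: Let_def)

lemma run_Suc_Some:
  "\<pi> (run m \<pi> \<phi> n) = Some u \<Longrightarrow> run m \<pi> \<phi> (Suc n) = run m \<pi> \<phi> n @ [(u, feedback m \<phi> u)]"
  by (simp add: Let_def)

lemma observed_active_run_subset_reach:
  "observed_active (run m \<pi> \<phi> n) \<inter> {..<m} \<subseteq> reach m \<phi> (seeds m \<pi> \<phi> n)"
proof (induction n)
  case 0
  show ?case by (simp add: observed_active_def)
next
  case (Suc n)
  show ?case
  proof (cases "\<pi> (run m \<pi> \<phi> n)")
    case None
    then have "run m \<pi> \<phi> (Suc n) = run m \<pi> \<phi> n" by (rule run_Suc_None)
    then show ?thesis using Suc.IH by (simp add: seeds_def)
  next
    case (Some u)
    then have run: "run m \<pi> \<phi> (Suc n) = run m \<pi> \<phi> n @ [(u, feedback m \<phi> u)]"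
      by (rule run_Suc_Some)
    have seeds: "seeds m \<pi> \<phi> (Suc n) = insert u (seeds m \<pi> \<phi> n)"
      unfolding seeds_def run by simp
    have observed: "observed_active (run m \<pi> \<phi> (Suc n))
        = observed_active (run m \<pi> \<phi> n) \<union> insert u (reach m \<phi> {u})"
      unfolding run by (rule observed_active_snoc_feedback)
    have "reach m \<phi> (seeds m \<pi> \<phi> n) \<union> reach m \<phi> {u} \<subseteq> reach m \<phi> (insert u (seeds m \<pi> \<phi> n))"
      by (intro Un_least reach_mono) auto
    moreover have "u < m \<Longrightarrow> u \<in> reach m \<phi> {u}" by (auto simp: reach_def)
    ultimately show ?thesis
      using Suc.IH unfolding seeds observed by blast
  qed
qed

lemma blocked_before_mono: "i \<le> j \<Longrightarrow> blocked_before \<phi> i \<le> blocked_before \<phi> j"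
  unfolding blocked_before_def by (intro card_mono) auto

lemma blocked_before_Suc_blocked:
  assumes "i \<le> y" "y \<notin> \<phi>"
  shows "Suc (blocked_before \<phi> i) \<le> blocked_before \<phi> (Suc y)"
proof -
  have "card (insert y ({..<i} - \<phi>)) \<le> card ({..<Suc y} - \<phi>)"
    using assms by (intro card_mono) auto
  moreover have "card (insert y ({..<i} - \<phi>)) = Suc (card ({..<i} - \<phi>))"
    using assms by simp
  ultimately show ?thesis unfolding blocked_before_def by simp
qed

lemma greedy_run_invariant:
  "\<exists>x. observed_active (run m (greedy_policy m) \<phi> n) = {..<x} \<and> (m \<le> x \<or> n \<le> blocked_before \<phi> x)"
proof (induction n)
  case 0
  show ?case by (auto simp: observed_active_def)
next
  case (Suc n)
  let ?h = "run m (greedy_policy m) \<phi> n"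
  from Suc obtain x where obs: "observed_active ?h = {..<x}"
    and inv: "m \<le> x \<or> n \<le> blocked_before \<phi> x"
    by blast
  have "(LEAST j. j \<notin> observed_active ?h) = x" unfolding obs by (rule Least_equality) auto
  then have policy: "greedy_policy m ?h = (if x < m then Some x else None)"
    unfolding greedy_policy_def by simp
  show ?case
  proof (cases "x < m")
    case False
    then have "run m (greedy_policy m) \<phi> (Suc n) = ?h" using policy by (simp add: run_Suc_None)
    then show ?thesis using obs False by auto
  next
    case True
    obtain y where y: "x \<le> y" "reach m \<phi> {x} = {x..y}" "Suc y = m \<or> y \<notin> \<phi>"
      using reach_singleton_interval[OF True] by blast
    have run: "run m (greedy_policy m) \<phi> (Suc n) = ?h @ [(x, feedback m \<phi> x)]"
      using True policy by (simp add: run_Suc_Some)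
    have "observed_active (run m (greedy_policy m) \<phi> (Suc n)) = {..<x} \<union> insert x {x..y}"
      unfolding run observed_active_snoc_feedback obs y(2) ..
    also have "\<dots> = {..<Suc y}" using y(1) by auto
    finally have "observed_active (run m (greedy_policy m) \<phi> (Suc n)) = {..<Suc y}" .
    moreover have "m \<le> Suc y \<or> Suc n \<le> blocked_before \<phi> (Suc y)"
      using y inv True blocked_before_Suc_blocked[of x y \<phi>] by auto
    ultimately show ?thesis by blast
  qed
qed

lemma greedy_activates:
  assumes "j < m" "blocked_before \<phi> j < k"
  shows "j \<in> reach m \<phi> (seeds m (greedy_policy m) \<phi> k)"
proof -
  obtain x where obs: "observed_active (run m (greedy_policy m) \<phi> k) = {..<x}"
    and inv: "m \<le> x \<or> k \<le> blocked_before \<phi> x"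
    using greedy_run_invariant by blast
  have "j < x"
    using assms inv blocked_before_mono[of x j \<phi>] by (cases "j < x") auto
  then show ?thesis
    using observed_active_run_subset_reach[of m "greedy_policy m" \<phi> k] obs assms(1) by blast
qed

text \<open>Markov's inequality for the exponential moment x ^ (blocked_before \<phi> j) bounds the
  probability that node j is missed.\<close>

lemma adaptive_spread_greedy_ge:
  assumes q: "0 \<le> q" "q \<le> 1" and x: "1 \<le> x"
  shows "real m - real m * (q + (1 - q) * x) ^ m / x ^ k
           \<le> adaptive_spread m (\<lambda>_. q) (greedy_policy m) k"
proof -
  let ?b = "q + (1 - q) * x"
  let ?active = "\<lambda>\<phi> j. if j \<in> reach m \<phi> (seeds m (greedy_policy m) \<phi> k) then 1 else 0 :: real"
  have probs: "line_probs m (\<lambda>_. q)" using q by (simp add: line_probs_def)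
  have "1 \<le> ?b" using q x mult_left_mono[of 1 x "1 - q"] by simp
  have markov: "1 - x ^ blocked_before \<phi> j / x ^ k \<le> ?active \<phi> j" if "j < m" for \<phi> j
  proof (cases "blocked_before \<phi> j < k")
    case True
    then show ?thesis using greedy_activates[OF that] x by simp
  next
    case False
    then have "x ^ k \<le> x ^ blocked_before \<phi> j" using x by (intro power_increasing) auto
    then show ?thesis using x by simp
  qed
  have expected_missed: "line_expectation m (\<lambda>_. q) (\<lambda>\<phi>. 1 - x ^ blocked_before \<phi> j / x ^ k)
      = 1 - ?b ^ j / x ^ k" if "j < m" for j
    using line_expectation_power_blocked[of "{..<j}" m q x] that
    by (simp add: blocked_before_def line_expectation_diff line_expectation_divide
        line_expectation_const)
  have "real m - real m * ?b ^ m / x ^ k = (\<Sum>j<m. 1 - ?b ^ m / x ^ k)"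
    by (simp add: right_diff_distrib)
  also have "\<dots> \<le> (\<Sum>j<m. 1 - ?b ^ j / x ^ k)"
    using \<open>1 \<le> ?b\<close> x by (intro sum_mono diff_left_mono divide_right_mono power_increasing) auto
  also have "\<dots> = line_expectation m (\<lambda>_. q) (\<lambda>\<phi>. \<Sum>j<m. 1 - x ^ blocked_before \<phi> j / x ^ k)"
    by (simp add: line_expectation_sum expected_missed)
  also have "\<dots> \<le> line_expectation m (\<lambda>_. q) (\<lambda>\<phi>. \<Sum>j<m. ?active \<phi> j)"
    using probs markov by (intro line_expectation_mono sum_mono) auto
  also have "\<dots> = adaptive_spread m (\<lambda>_. q) (greedy_policy m) k"
    unfolding adaptive_spread_eq_line_expectation card_reach_eq_sum ..
  finally show ?thesis .
qed

lemma adaptive_spread_le_OPT_A: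
  assumes "line_probs m p"
  shows "adaptive_spread m p \<pi> k \<le> OPT_A m p k"
proof -
  have "adaptive_spread m p \<pi>' k \<le> real m" for \<pi>'
  proof -
    have "card (reach m \<phi> S) \<le> m" for \<phi> S
      using card_mono[of "{..<m}" "reach m \<phi> S"] unfolding reach_def by auto
    then have "adaptive_spread m p \<pi>' k \<le> line_expectation m p (\<lambda>_. real m)"
      unfolding adaptive_spread_eq_line_expectation
      using assms by (intro line_expectation_mono) auto
    then show ?thesis by (simp add: line_expectation_const)
  qed
  then show ?thesis unfolding OPT_A_def by (intro cSUP_upper bdd_aboveI2) auto
qed

lemma mult_exp_one_minus_less_one:
  fixes a :: real
  assumes "0 < a" "a \<noteq> 1"
  shows "a * exp (1 - a) < 1"
proof -
  have "ln a < a - 1" using ln_le_minus_one[of a] ln_eq_minus_one[of a] assms by fastforce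
  then have "exp (ln a + (1 - a)) < exp 0" by simp
  then show ?thesis using assms by (simp add: exp_add)
qed

lemma OPT_A_instance_ge:
  fixes a :: real
  assumes a: "0 < a" "a < 1" and n: "1 \<le> n"
  shows "real (n * n) * (1 - (a * exp (1 - a)) ^ n) \<le> OPT_A (n * n) (\<lambda>_. 1 - a / n) n"
proof -
  define q where "q = 1 - a / n"
  define b where "b = q + (1 - q) * (1 / a)"
  have "0 < a / n" "a / n \<le> 1" using a n by auto
  then have q: "0 \<le> q" "q \<le> 1" unfolding q_def by auto
  have b_eq: "b = 1 + (1 - a) / n" unfolding b_def q_def using a n by (simp add: field_simps)
  have "b \<le> exp ((1 - a) / n)" unfolding b_eq by (rule exp_ge_add_one_self)
  moreover have "0 \<le> b" unfolding b_eq using a by simp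
  ultimately have "b ^ (n * n) \<le> exp ((1 - a) / n) ^ (n * n)" by (rule power_mono)
  also have "\<dots> = exp (1 - a) ^ n"
    using n by (simp add: exp_of_nat_mult[symmetric] power_mult)
  finally have "b ^ (n * n) * a ^ n \<le> (a * exp (1 - a)) ^ n"
    using a by (simp add: power_mult_distrib mult_right_mono mult.commute)
  then have "real (n * n) * (b ^ (n * n) * a ^ n) \<le> real (n * n) * (a * exp (1 - a)) ^ n"
    by (rule mult_left_mono) simp
  then have "real (n * n) * (1 - (a * exp (1 - a)) ^ n)
      \<le> real (n * n) - real (n * n) * b ^ (n * n) / (1 / a) ^ n"
    by (simp add: power_one_over right_diff_distrib)
  also have "\<dots> \<le> adaptive_spread (n * n) (\<lambda>_. q) (greedy_policy (n * n)) n"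
    unfolding b_def using adaptive_spread_greedy_ge[OF q, of "1 / a" "n * n" n] a by simp
  also have "\<dots> \<le> OPT_A (n * n) (\<lambda>_. q) n"
    using q by (intro adaptive_spread_le_OPT_A) (simp add: line_probs_def)
  finally show ?thesis unfolding q_def .
qed

lemma instance_ratio_ge:
  fixes a :: real
  assumes a: "0 < a" "a < 1" and n: "1 \<le> n"
  shows "a * (1 - (a * exp (1 - a)) ^ n) / (1 - (1 - a / n) ^ n)
           \<le> OPT_A (n * n) (\<lambda>_. 1 - a / n) n / OPT_N (n * n) (\<lambda>_. 1 - a / n) n"
proof -
  define q where "q = 1 - a / n"
  have q: "0 < q" "q < 1" using a n unfolding q_def by auto
  have "q ^ n < 1" using q n by (simp add: power_less_one_iff)
  have N: "OPT_N (n * n) (\<lambda>_. q) n \<le> real (n * n) * (1 - q ^ n) / a"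
    using OPT_N_le[OF q, of n n] a n unfolding q_def by (simp add: field_simps)
  have "1 \<le> OPT_N (n * n) (\<lambda>_. q) n"
    using q n by (intro OPT_N_ge_1) (auto simp: line_probs_def)
  have "0 \<le> 1 - (a * exp (1 - a)) ^ n"
    using mult_exp_one_minus_less_one[of a] a by (simp add: power_le_one)
  then have "a * (1 - (a * exp (1 - a)) ^ n) / (1 - q ^ n)
      = real (n * n) * (1 - (a * exp (1 - a)) ^ n) / (real (n * n) * (1 - q ^ n) / a)"
    using a n \<open>q ^ n < 1\<close> by (simp add: field_simps)
  also have "\<dots> \<le> real (n * n) * (1 - (a * exp (1 - a)) ^ n) / OPT_N (n * n) (\<lambda>_. q) n"
  proof (rule divide_left_mono[OF N])
    have "0 < real (n * n) * (1 - q ^ n) / a" using a n \<open>q ^ n < 1\<close> by simp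
    then show "0 < real (n * n) * (1 - q ^ n) / a * OPT_N (n * n) (\<lambda>_. q) n"
      using \<open>1 \<le> OPT_N (n * n) (\<lambda>_. q) n\<close> by (intro mult_pos_pos) auto
  qed (use \<open>0 \<le> 1 - (a * exp (1 - a)) ^ n\<close> in simp)
  also have "\<dots> \<le> OPT_A (n * n) (\<lambda>_. q) n / OPT_N (n * n) (\<lambda>_. q) n"
    using OPT_A_instance_ge[OF a n] \<open>1 \<le> OPT_N (n * n) (\<lambda>_. q) n\<close>
    unfolding q_def by (intro divide_right_mono) auto
  finally show ?thesis unfolding q_def .
qed

lemma instance_ratio_tendsto:
  fixes a :: real
  assumes "0 < a" "a < 1"
  shows "(\<lambda>n. a * (1 - (a * exp (1 - a)) ^ n) / (1 - (1 - a / n) ^ n)) \<longlonglongrightarrow> a / (1 - exp (- a))"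
proof -
  have "norm (a * exp (1 - a)) < 1"
    using mult_exp_one_minus_less_one[of a] assms by simp
  moreover have "(\<lambda>n. (1 - a / real n) ^ n) \<longlonglongrightarrow> exp (- a)"
    using tendsto_exp_limit_sequentially[of "- a"] by simp
  ultimately have "(\<lambda>n. a * (1 - (a * exp (1 - a)) ^ n) / (1 - (1 - a / n) ^ n))
      \<longlonglongrightarrow> a * (1 - 0) / (1 - exp (- a))"
    using assms by (intro tendsto_intros LIMSEQ_power_zero) auto
  then show ?thesis by simp
qed

lemma ratio_tendsto_at_left_1:
  "((\<lambda>a. a / (1 - exp (- a))) \<longlongrightarrow> exp 1 / (exp 1 - 1 :: real)) (at_left 1)"
proof -
  have "((\<lambda>a. a / (1 - exp (- a))) \<longlongrightarrow> 1 / (1 - exp (- 1 :: real))) (at_left 1)"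
    by (intro tendsto_intros) auto
  moreover have "1 / (1 - exp (- 1 :: real)) = exp 1 / (exp 1 - 1)"
    by (simp add: exp_minus field_simps)
  ultimately show ?thesis by simp
qed

theorem theorem4:
  fixes c :: real
  assumes "c < exp 1 / (exp 1 - 1)"
  shows "\<exists>m p k. m \<ge> 1 \<and> k \<ge> 1 \<and> line_probs m p \<and> OPT_A m p k / OPT_N m p k > c"
proof -
  have "\<forall>\<^sub>F a in at_left 1. c < a / (1 - exp (- a)) \<and> a \<in> {0<..<1}"
    using order_tendstoD(1)[OF ratio_tendsto_at_left_1 assms] eventually_at_left_real[of 0 1]
    by (rule eventually_conj) simp
  then obtain a :: real where a: "0 < a" "a < 1" "c < a / (1 - exp (- a))"
    using eventually_happens[of _ "at_left (1 :: real)"] by auto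
  have "\<forall>\<^sub>F n in sequentially. c < a * (1 - (a * exp (1 - a)) ^ n) / (1 - (1 - a / n) ^ n) \<and> 1 \<le> n"
    using order_tendstoD(1)[OF instance_ratio_tendsto[OF a(1,2)] a(3)] eventually_ge_at_top
    by (rule eventually_conj)
  then obtain n :: nat
    where n: "1 \<le> n" "c < a * (1 - (a * exp (1 - a)) ^ n) / (1 - (1 - a / n) ^ n)"
    using eventually_happens[of _ sequentially] by auto
  have "line_probs (n * n) (\<lambda>_. 1 - a / n)"
    using a n by (simp add: line_probs_def)
  moreover have "c < OPT_A (n * n) (\<lambda>_. 1 - a / n) n / OPT_N (n * n) (\<lambda>_. 1 - a / n) n"
    using n instance_ratio_ge[OF a(1,2) n(1)] by linarith
  ultimately show ?thesis
    using n(1) by (intro exI[of _ "n * n"] exI[of _ "\<lambda>_. 1 - a / n"] exI[of _ n]) auto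
qed

end
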